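(* Let $M$ be a nondegenerate $(0,1)$-matrix of order $n$, and let $A$ be the matrix of order $n+1$ obtained from $M$ by adding an $(n+1)$th row $(0,\dots,0,1)$ and an $(n+1)$th column consisting of $1$'s. Write $A^{-1}=(l_{ij})$. Then for each $i=1,\dots,n$, $\sum_{j=1}^{n+1}|l_{ij}|\ge2$. If $|\det M|=h_n$, then $\sum_{j=1}^{n+1}|l_{ij}|=2$ for all $i=1,\dots,n$. Consequently, if $\sum_{j=1}^{n+1}|l_{ij}|>2$ for some $i$, then $|\det M|<h_n$.
   Context: $h_n$ denotes the maximal value of the determinant of an $n\times n$ matrix with all entries in $\{0,1\}$. *)

theory Defs
  imports "Jordan_Normal_Form.Determinant"
begin

definition zero_one_mat :: "nat \<Rightarrow> real mat \<Rightarrow> bool" where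
  "zero_one_mat n M \<longleftrightarrow> M \<in> carrier_mat n n \<and>
     (\<forall>i<n. \<forall>j<n. M $$ (i,j) = 0 \<or> M $$ (i,j) = 1)"

definition h :: "nat \<Rightarrow> real" where
  "h n = Max {det M | M. zero_one_mat n M}"

definition border_mat :: "nat \<Rightarrow> real mat \<Rightarrow> real mat" where
  "border_mat n M = mat (n+1) (n+1)
     (\<lambda>(i,j). if j = n then 1 else if i = n then 0 else M $$ (i,j))"

end

theory Submission
  imports Defs
begin

text \<open>Let \<open>x\<close> be row \<open>i \<le> n\<close> of \<open>A\<^sup>-\<^sup>1\<close>. Multiplying it with the last column and with
  column \<open>i\<close> of \<open>A\<close> gives \<open>x\<^sub>1 + \<dots> + x\<^sub>n\<^sub>+\<^sub>1 = 0\<close> and \<open>\<Sum>\<^sub>j x\<^sub>j m\<^sub>j\<^sub>i = 1\<close>; splitting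
  \<open>x\<^sub>1, \<dots>, x\<^sub>n\<close> along the support of column \<open>i\<close> of \<open>M\<close> yields \<open>\<Sum>\<^sub>j \<bar>x\<^sub>j\<bar> \<ge> 2\<close>.
  Conversely, by Cramer's rule, replacing column \<open>i\<close> of \<open>M\<close> by a (0,1)-vector \<open>f\<close>
  gives a (0,1)-matrix of determinant \<open>(\<Sum>\<^sub>j x\<^sub>j f\<^sub>j) det M\<close>. If \<open>\<bar>det M\<bar> = h\<^sub>n\<close> this
  forces \<open>\<bar>\<Sum>\<^sub>j x\<^sub>j f\<^sub>j\<bar> \<le> 1\<close>; taking for \<open>f\<close> the indicators of the positive and of the
  negative entries among \<open>x\<^sub>1, \<dots>, x\<^sub>n\<close> bounds \<open>\<Sum>\<^sub>j \<bar>x\<^sub>j\<bar>\<close> by 2.\<close>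

lemma two_le_sum_abs:
  fixes x a :: "nat \<Rightarrow> real"
  assumes a01: "\<forall>j<n. a j = 0 \<or> a j = 1"
    and sum_zero: "(\<Sum>j<n. x j) + x n = 0"
    and dot_one: "(\<Sum>j<n. x j * a j) = 1"
  shows "(\<Sum>j<n+1. \<bar>x j\<bar>) \<ge> 2"
proof -
  have "(\<Sum>j<n. \<bar>x j\<bar>) = (\<Sum>j<n. \<bar>x j * a j\<bar>) + (\<Sum>j<n. \<bar>x j * (1 - a j)\<bar>)"
    unfolding sum.distrib[symmetric] using a01 by (intro sum.cong) auto
  also have "\<dots> \<ge> \<bar>\<Sum>j<n. x j * a j\<bar> + \<bar>\<Sum>j<n. x j * (1 - a j)\<bar>"
    by (intro add_mono sum_abs)
  also have "(\<Sum>j<n. x j * (1 - a j)) = - x n - 1"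
    using sum_zero dot_one by (simp add: algebra_simps sum_subtractf)
  finally show ?thesis
    using dot_one by simp
qed

lemma sum_abs_le_two:
  fixes x :: "nat \<Rightarrow> real"
  assumes sum_zero: "(\<Sum>j<n. x j) + x n = 0"
    and dot_le_one: "\<And>f. \<forall>j<n. f j = 0 \<or> f j = 1 \<Longrightarrow> \<bar>\<Sum>j<n. x j * f j\<bar> \<le> 1"
  shows "(\<Sum>j<n+1. \<bar>x j\<bar>) \<le> 2"
proof -
  define P where "P = (\<Sum>j<n. x j * (if x j > 0 then 1 else 0))"
  define N where "N = (\<Sum>j<n. x j * (if x j < 0 then 1 else 0))"
  have "\<bar>P\<bar> \<le> 1" "\<bar>N\<bar> \<le> 1"
    unfolding P_def N_def by (intro dot_le_one; simp)+
  moreover have "P \<ge> 0" "N \<le> 0"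
    unfolding P_def N_def by (auto intro: sum_nonneg sum_nonpos simp: mult_le_0_iff)
  moreover have "(\<Sum>j<n. \<bar>x j\<bar>) = P - N" "(\<Sum>j<n. x j) = P + N"
    unfolding P_def N_def sum_subtractf[symmetric] sum.distrib[symmetric]
    by (auto intro: sum.cong)
  ultimately show ?thesis
    using sum_zero by (auto simp: abs_if split: if_splits)
qed

lemma finite_zero_one_mat: "finite {M. zero_one_mat n M}"
proof (rule finite_subset)
  show "{M. zero_one_mat n M} \<subseteq>
      (\<lambda>S. mat n n (\<lambda>ij. if ij \<in> S then 1 else 0)) ` Pow ({..<n} \<times> {..<n})"
  proof
    fix M assume "M \<in> {M. zero_one_mat n M}"
    then have "M = mat n n (\<lambda>ij. if ij \<in> {(a, b). a < n \<and> b < n \<and> M $$ (a, b) = 1} then 1 else 0)"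
      unfolding zero_one_mat_def by (intro eq_matI) auto
    then show "M \<in> (\<lambda>S. mat n n (\<lambda>ij. if ij \<in> S then 1 else 0)) ` Pow ({..<n} \<times> {..<n})"
      by blast
  qed
qed simp

lemma det_le_h: "zero_one_mat n M \<Longrightarrow> det M \<le> h n"
  unfolding h_def using finite_zero_one_mat[of n] by (intro Max_ge) auto

text \<open>A negative determinant is reversed by swapping two rows; for \<open>n \<le> 1\<close> it cannot occur.\<close>
lemma abs_det_le_h:
  assumes M: "zero_one_mat n M"
  shows "\<bar>det M\<bar> \<le> h n"
proof (cases "det M \<ge> 0")
  case True
  then show ?thesis using det_le_h[OF M] by simp
next
  case neg: False
  have Mc: "M \<in> carrier_mat n n" and M01: "\<forall>i<n. \<forall>j<n. M $$ (i, j) = 0 \<or> M $$ (i, j) = 1"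
    using M unfolding zero_one_mat_def by auto
  show ?thesis
  proof (cases "n \<ge> 2")
    case True
    have "det (swaprows 0 1 M) = - det M"
      using det_swaprows[OF _ _ _ Mc, of 0 1] True by auto
    moreover have "zero_one_mat n (swaprows 0 1 M)"
      unfolding zero_one_mat_def using Mc M01 True by auto
    ultimately show ?thesis using det_le_h neg by fastforce
  next
    case False
    then have "upper_triangular M" unfolding upper_triangular_def using Mc by auto
    then have "det M = prod_list (diag_mat M)" using det_upper_triangular Mc by blast
    also have "\<dots> \<ge> 0" unfolding diag_mat_def using Mc M01
      by (intro prod_list_nonneg) force
    finally show ?thesis using neg by simp
  qed
qed

lemma det_border_mat:
  assumes "M \<in> carrier_mat n n"
  shows "det (border_mat n M) = det M"
proof -
  have "border_mat n M = four_block_mat M (mat n 1 (\<lambda>_. 1)) (0\<^sub>m 1 n) (1\<^sub>m 1)"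
    using assms by (intro eq_matI) (auto simp: border_mat_def four_block_mat_def)
  then show ?thesis
    using det_four_block_mat_lower_left_zero[OF assms, of _ 1 "0\<^sub>m 1 n" "1\<^sub>m 1"] by auto
qed

lemma border_mat_replace_col:
  assumes "M \<in> carrier_mat n n" and "i < n"
  shows "replace_col (border_mat n M) (vec (n+1) (\<lambda>j. if j < n then f j else 0)) i
    = border_mat n (replace_col M (vec n f) i)"
  using assms by (intro eq_matI) (auto simp: replace_col_def border_mat_def)

lemma zero_one_mat_replace_col:
  assumes "zero_one_mat n M" and "\<forall>j<n. f j = 0 \<or> f j = 1"
  shows "zero_one_mat n (replace_col M (vec n f) i)"
  using assms unfolding zero_one_mat_def by (auto simp: replace_col_def) metis+

lemma det_replace_col_right_inverse:
  fixes A L :: "'a :: comm_ring_1 mat"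
  assumes A: "A \<in> carrier_mat n n" and L: "L \<in> carrier_mat n n"
    and AL: "A * L = 1\<^sub>m n" and c: "c \<in> carrier_vec n" and k: "k < n"
  shows "det (replace_col A c k) = (L *\<^sub>v c) $ k * det A"
proof -
  have "A *\<^sub>v (L *\<^sub>v c) = c"
    using assoc_mult_mat_vec[OF A L c, symmetric] AL c by simp
  then show ?thesis
    using cramer_lemma_mat[OF A _ k, of "L *\<^sub>v c"] L c by simp
qed

lemma border_mat_right_inverse_row_dot:
  assumes M: "zero_one_mat n M" and L: "L \<in> carrier_mat (n+1) (n+1)"
    and inv: "inverts_mat (border_mat n M) L" and i: "i < n"
    and f01: "\<forall>j<n. f j = 0 \<or> f j = 1"
    and extremal: "\<bar>det M\<bar> = h n" and nonsingular: "det M \<noteq> 0"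
  shows "\<bar>\<Sum>j<n. L $$ (i, j) * f j\<bar> \<le> 1"
proof -
  have Mc: "M \<in> carrier_mat n n" using M unfolding zero_one_mat_def by auto
  define c where "c = vec (n+1) (\<lambda>j. if j < n then f j else (0::real))"
  have "(L *\<^sub>v c) $ i = (\<Sum>j<n+1. L $$ (i, j) * c $ j)"
    using L i unfolding c_def by (simp add: scalar_prod_def lessThan_atLeast0)
  also have "\<dots> = (\<Sum>j<n. L $$ (i, j) * f j)"
    unfolding c_def by simp
  finally have "det (replace_col (border_mat n M) c i) = (\<Sum>j<n. L $$ (i, j) * f j) * det M"
    using det_replace_col_right_inverse[OF _ L _ _, of "border_mat n M" c i] inv i
      det_border_mat[OF Mc] by (simp add: c_def border_mat_def inverts_mat_def)
  then have "det (replace_col M (vec n f) i) = (\<Sum>j<n. L $$ (i, j) * f j) * det M"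
    using det_border_mat[of "replace_col M (vec n f) i" n] Mc
    unfolding c_def border_mat_replace_col[OF Mc i] by (simp add: replace_col_def)
  then have "\<bar>(\<Sum>j<n. L $$ (i, j) * f j) * det M\<bar> \<le> \<bar>det M\<bar>"
    using abs_det_le_h[OF zero_one_mat_replace_col[OF M f01]] extremal by metis
  then show ?thesis
    using nonsingular by (simp add: abs_mult)
qed

lemma border_mat_left_inverse_row:
  assumes L: "L \<in> carrier_mat (n+1) (n+1)"
    and inv: "inverts_mat L (border_mat n M)" and i: "i < n"
  shows "(\<Sum>j<n. L $$ (i, j)) + L $$ (i, n) = 0"
    and "(\<Sum>j<n. L $$ (i, j) * M $$ (j, i)) = 1"
proof -
  let ?A = "border_mat n M"
  have LA: "L * ?A = 1\<^sub>m (n+1)" using inv L unfolding inverts_mat_def by auto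
  have entry: "(\<Sum>j<n+1. L $$ (i, j) * ?A $$ (j, k)) = (if k = i then 1 else 0)" if "k < n+1" for k
    using arg_cong[OF LA, of "\<lambda>B. B $$ (i, k)"] L i that
    by (simp add: border_mat_def scalar_prod_def lessThan_atLeast0)
  show "(\<Sum>j<n. L $$ (i, j)) + L $$ (i, n) = 0"
    using entry[of n] i by (simp add: border_mat_def)
  show "(\<Sum>j<n. L $$ (i, j) * M $$ (j, i)) = 1"
    using entry[of i] i by (simp add: border_mat_def)
qed

theorem theorem9p1:
  fixes n :: nat and M L :: "real mat"
  assumes "zero_one_mat n M"
    and "det M \<noteq> 0"
    and "L \<in> carrier_mat (n+1) (n+1)"
    and "inverts_mat (border_mat n M) L" and "inverts_mat L (border_mat n M)"
  shows "(\<forall>i<n. (\<Sum>j<n+1. \<bar>L $$ (i,j)\<bar>) \<ge> 2)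
    \<and> (\<bar>det M\<bar> = h n \<longrightarrow> (\<forall>i<n. (\<Sum>j<n+1. \<bar>L $$ (i,j)\<bar>) = 2))
    \<and> ((\<exists>i<n. (\<Sum>j<n+1. \<bar>L $$ (i,j)\<bar>) > 2) \<longrightarrow> \<bar>det M\<bar> < h n)"
proof -
  note row = border_mat_left_inverse_row[OF assms(3,5)]
  have M01: "\<forall>i<n. \<forall>j<n. M $$ (j, i) = 0 \<or> M $$ (j, i) = 1"
    using assms(1) unfolding zero_one_mat_def by auto
  have ge2: "\<forall>i<n. (\<Sum>j<n+1. \<bar>L $$ (i,j)\<bar>) \<ge> 2"
    using two_le_sum_abs[of n, OF _ row] M01 by blast
  have eq2: "\<forall>i<n. (\<Sum>j<n+1. \<bar>L $$ (i,j)\<bar>) = 2" if "\<bar>det M\<bar> = h n"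
    using ge2 sum_abs_le_two[OF row(1)]
      border_mat_right_inverse_row_dot[OF assms(1,3,4) _ _ that assms(2)]
    by (meson antisym)
  show ?thesis
    using ge2 eq2 abs_det_le_h[OF assms(1)] by force
qed

end
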